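(* Let $\mathbf{P}=(P,\le,\mathcal T)$ be a $2$-separated topological poset in which the clopen final segments together with the clopen initial segments generate (form a subbase for) the topology $\mathcal T$. Then $\mathbf{P}$ is reflexive if and only if for every closed final segment $B\subseteq P$ and every closed initial segment $C\subseteq P$ with $C<B$, there exists a clopen final segment $u$ such that $B\subseteq u$ and $C\cap u=\emptyset$.
   Context: A topological poset $(P,\le,\mathcal T)$ is a poset with a Hausdorff topology; it is $2$-separated if it admits a continuous order-embedding into a power of the two-element chain $\mathbf{O}=(\{0,1\},\le)$, $0<1$, with the product topology. Final (initial) segments are upward (downward) closed subsets. For $A,B\subseteq P$, $C<B$ means $x<y$ for all $x\in C$, $y\in B$. Let $\mathbf{L}=(\{0,1\},\wedge,\vee,0,1)$ be the two-element bounded distributive lattice. $\mathbf{P}^*$ is the set of continuous order-preserving maps $P\to\{0,1\}$ with the bounded-lattice structure (pointwise $\wedge,\vee$, constants $0,1$) and the product topology induced from $\mathbf{L}^P$; $\mathbf{P}^{**}$ is the set of continuous bounded-lattice homomorphisms $\mathbf{P}^*\to\mathbf{L}$. $\mathbf{P}$ is reflexive if the evaluation map $P\to\mathbf{P}^{**}$, $x\mapsto(f\mapsto f(x))$, is onto. *)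

theory Defs
  imports "HOL-Analysis.Analysis"
begin

definition poset_on :: "'a set \<Rightarrow> ('a \<Rightarrow> 'a \<Rightarrow> bool) \<Rightarrow> bool" where
  "poset_on P le \<longleftrightarrow>
     (\<forall>x\<in>P. le x x) \<and>
     (\<forall>x\<in>P. \<forall>y\<in>P. le x y \<and> le y x \<longrightarrow> x = y) \<and>
     (\<forall>x\<in>P. \<forall>y\<in>P. \<forall>z\<in>P. le x y \<and> le y z \<longrightarrow> le x z)"

definition topological_poset :: "'a topology \<Rightarrow> ('a \<Rightarrow> 'a \<Rightarrow> bool) \<Rightarrow> bool" where
  "topological_poset T le \<longleftrightarrow> Hausdorff_space T \<and> poset_on (topspace T) le"

definition final_segment :: "'a set \<Rightarrow> ('a \<Rightarrow> 'a \<Rightarrow> bool) \<Rightarrow> 'a set \<Rightarrow> bool" where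
  "final_segment P le U \<longleftrightarrow> U \<subseteq> P \<and> (\<forall>x\<in>U. \<forall>y\<in>P. le x y \<longrightarrow> y \<in> U)"

definition initial_segment :: "'a set \<Rightarrow> ('a \<Rightarrow> 'a \<Rightarrow> bool) \<Rightarrow> 'a set \<Rightarrow> bool" where
  "initial_segment P le U \<longleftrightarrow> U \<subseteq> P \<and> (\<forall>x\<in>U. \<forall>y\<in>P. le y x \<longrightarrow> y \<in> U)"

text \<open>The two-element chain O = ({0,1}, <=) is rendered as bool with False < True and the
  discrete topology. The index set ranges over
  sets of subsets of the carrier type, which is enough.\<close>

definition two_separated :: "'a topology \<Rightarrow> ('a \<Rightarrow> 'a \<Rightarrow> bool) \<Rightarrow> bool" where
  "two_separated T le \<longleftrightarrow>
     (\<exists>(I :: 'a set set) (e :: 'a \<Rightarrow> 'a set \<Rightarrow> bool).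
        continuous_map T (product_topology (\<lambda>_. discrete_topology (UNIV :: bool set)) I) e \<and>
        (\<forall>x\<in>topspace T. \<forall>y\<in>topspace T. le x y \<longleftrightarrow> (\<forall>i\<in>I. e x i \<le> e y i)))"

definition clopen_final :: "'a topology \<Rightarrow> ('a \<Rightarrow> 'a \<Rightarrow> bool) \<Rightarrow> 'a set \<Rightarrow> bool" where
  "clopen_final T le U \<longleftrightarrow> final_segment (topspace T) le U \<and> openin T U \<and> closedin T U"

definition clopen_initial :: "'a topology \<Rightarrow> ('a \<Rightarrow> 'a \<Rightarrow> bool) \<Rightarrow> 'a set \<Rightarrow> bool" where
  "clopen_initial T le U \<longleftrightarrow> initial_segment (topspace T) le U \<and> openin T U \<and> closedin T U"

abbreviation powL :: "'b set \<Rightarrow> ('b \<Rightarrow> bool) topology" where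
  "powL S \<equiv> product_topology (\<lambda>_. discrete_topology (UNIV :: bool set)) S"

definition dual_star :: "'a topology \<Rightarrow> ('a \<Rightarrow> 'a \<Rightarrow> bool) \<Rightarrow> ('a \<Rightarrow> bool) set" where
  "dual_star T le = {f. f \<in> extensional (topspace T) \<and>
      continuous_map T (discrete_topology (UNIV :: bool set)) f \<and>
      (\<forall>x\<in>topspace T. \<forall>y\<in>topspace T. le x y \<longrightarrow> f x \<le> f y)}"

definition dual_star_top :: "'a topology \<Rightarrow> ('a \<Rightarrow> 'a \<Rightarrow> bool) \<Rightarrow> ('a \<Rightarrow> bool) topology" where
  "dual_star_top T le = subtopology (powL (topspace T)) (dual_star T le)"

definition dual_star_star :: "'a topology \<Rightarrow> ('a \<Rightarrow> 'a \<Rightarrow> bool) \<Rightarrow> (('a \<Rightarrow> bool) \<Rightarrow> bool) set" where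
  "dual_star_star T le = (let P = topspace T; Ps = dual_star T le in
     {\<phi>. \<phi> \<in> extensional Ps \<and>
        continuous_map (dual_star_top T le) (discrete_topology (UNIV :: bool set)) \<phi> \<and>
        (\<forall>f\<in>Ps. \<forall>g\<in>Ps. \<phi> (\<lambda>x\<in>P. f x \<and> g x) = (\<phi> f \<and> \<phi> g)) \<and>
        (\<forall>f\<in>Ps. \<forall>g\<in>Ps. \<phi> (\<lambda>x\<in>P. f x \<or> g x) = (\<phi> f \<or> \<phi> g)) \<and>
        \<phi> (\<lambda>x\<in>P. False) = False \<and>
        \<phi> (\<lambda>x\<in>P. True) = True})"

definition evaluation :: "'a topology \<Rightarrow> ('a \<Rightarrow> 'a \<Rightarrow> bool) \<Rightarrow> 'a \<Rightarrow> (('a \<Rightarrow> bool) \<Rightarrow> bool)" where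
  "evaluation T le x = (\<lambda>f\<in>dual_star T le. f x)"

definition reflexive_tposet :: "'a topology \<Rightarrow> ('a \<Rightarrow> 'a \<Rightarrow> bool) \<Rightarrow> bool" where
  "reflexive_tposet T le \<longleftrightarrow> dual_star_star T le \<subseteq> evaluation T le ` topspace T"

end

theory Submission
  imports Defs
begin

text \<open>
  The elements of \<open>P*\<close> are exactly the characteristic functions of the clopen final
  segments, so a point \<open>\<phi>\<close> of \<open>P**\<close> is a bounded lattice homomorphism \<open>\<Phi>\<close> on clopen final
  segments whose value at \<open>u\<close> depends only on \<open>u\<close> near finitely many points. By primeness,
  \<open>\<Phi> u\<close> holds iff \<open>u\<close> contains a point of the closed initial segment \<open>C\<close> of points all
  of whose clopen final neighbourhoods satisfy \<open>\<Phi>\<close>, and \<open>\<Phi> u\<close> fails iff some point outside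
  \<open>u\<close> lies in the closed final segment \<open>B\<close>, the intersection of all \<open>u\<close> with \<open>\<Phi> u\<close>.
  If \<open>B\<close> and \<open>C\<close> were disjoint, 2-separation would give \<open>C < B\<close>, and a clopen final segment
  separating them contradicts both statements; so \<open>\<phi>\<close> is the evaluation at a point of
  \<open>B \<inter> C\<close>.

  Conversely, if no clopen final segment separates closed segments \<open>C < B\<close>, then a clopen
  final segment contains \<open>B\<close> iff it meets \<open>C\<close>, and \<open>f \<mapsto> (f meets C)\<close> lies in \<open>P**\<close>.
  It is not an evaluation: a point outside \<open>B\<close> (or outside \<open>C\<close>) has a basic
  neighbourhood \<open>u \<inter> D\<close>, with \<open>u\<close> clopen final and \<open>D\<close> clopen initial, missing \<open>B\<close>
  (or \<open>C\<close>), and testing the functional on \<open>u\<close> and on the complement of \<open>D\<close> gives a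
  contradiction. This is where the subbase hypothesis enters.
\<close>

section \<open>Product topologies and prime lattice homomorphisms\<close>

lemma continuous_map_discrete_bool_iff:
  "continuous_map X (discrete_topology UNIV) f \<longleftrightarrow>
     openin X {x \<in> topspace X. f x} \<and> closedin X {x \<in> topspace X. f x}"
proof
  assume f: "continuous_map X (discrete_topology UNIV) f"
  show "openin X {x \<in> topspace X. f x} \<and> closedin X {x \<in> topspace X. f x}"
    using openin_continuous_map_preimage[OF f, of "{True}"]
      closedin_continuous_map_preimage[OF f, of "{True}"] by simp
next
  assume clopen: "openin X {x \<in> topspace X. f x} \<and> closedin X {x \<in> topspace X. f x}"
  have fibre: "openin X {x \<in> topspace X. f x = b}" for b
  proof (cases b)
    case False
    have "{x \<in> topspace X. f x = b} = topspace X - {x \<in> topspace X. f x}"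
      using False by blast
    then show ?thesis using clopen by (simp add: closedin_def)
  qed (use clopen in simp)
  have "openin X {x \<in> topspace X. f x \<in> U}" for U
  proof -
    have "{x \<in> topspace X. f x \<in> U} = (\<Union>b\<in>U. {x \<in> topspace X. f x = b})"
      by blast
    then show ?thesis using fibre by auto
  qed
  then show "continuous_map X (discrete_topology UNIV) f"
    by (simp add: continuous_map_def)
qed

lemma continuous_map_product_finite_support:
  fixes \<phi> :: "('i \<Rightarrow> 'b) \<Rightarrow> 'c"
  assumes \<phi>: "continuous_map (subtopology (product_topology (\<lambda>_. discrete_topology UNIV) S) X)
      (discrete_topology UNIV) \<phi>"
    and "f \<in> X" "X \<subseteq> extensional S"
  shows "\<exists>F. finite F \<and> (\<forall>g\<in>X. (\<forall>i\<in>F. g i = f i) \<longrightarrow> \<phi> g = \<phi> f)"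
proof -
  let ?P = "product_topology (\<lambda>_. discrete_topology (UNIV :: 'b set)) S"
  have "topspace (subtopology ?P X) = X"
    using assms(3) by (auto simp: PiE_iff extensional_def)
  then have "openin (subtopology ?P X) {g \<in> X. \<phi> g = \<phi> f}"
    using openin_continuous_map_preimage[OF \<phi>, of "{\<phi> f}"] by simp
  then obtain W where W: "openin ?P W" "{g \<in> X. \<phi> g = \<phi> f} = W \<inter> X"
    by (auto simp: openin_subtopology)
  then have "f \<in> W" using \<open>f \<in> X\<close> by blast
  then obtain U where U: "finite {i \<in> S. U i \<noteq> UNIV}" "f \<in> Pi\<^sub>E S U" "Pi\<^sub>E S U \<subseteq> W"
    using W(1) unfolding openin_product_topology_alt by auto
  have "\<phi> g = \<phi> f" if "g \<in> X" "\<forall>i\<in>{i \<in> S. U i \<noteq> UNIV}. g i = f i" for g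
  proof -
    have "g \<in> extensional S" using that(1) assms(3) by blast
    moreover have "g i \<in> U i" if "i \<in> S" for i
      using U(2) \<open>\<forall>i\<in>{i \<in> S. U i \<noteq> UNIV}. g i = f i\<close> that by (cases "U i = UNIV") (auto simp: PiE_iff)
    ultimately have "g \<in> Pi\<^sub>E S U" by (simp add: PiE_iff)
    then show ?thesis using U(3) W(2) \<open>g \<in> X\<close> by blast
  qed
  with U(1) show ?thesis by blast
qed

lemma openin_product_discrete_coordinate:
  assumes "C \<subseteq> S"
  shows "openin (product_topology (\<lambda>_. discrete_topology UNIV) S)
    {g \<in> topspace (product_topology (\<lambda>_. discrete_topology UNIV) S). \<exists>c\<in>C. g c = b}"
proof -
  let ?P = "product_topology (\<lambda>_. discrete_topology UNIV) S"
  have "{g \<in> topspace ?P. \<exists>c\<in>C. g c = b} = (\<Union>c\<in>C. {g \<in> topspace ?P. g c \<in> {b}})"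
    by blast
  moreover have "openin ?P {g \<in> topspace ?P. g c \<in> {b}}" if "c \<in> C" for c
    using that assms
    by (intro openin_continuous_map_preimage[OF continuous_map_product_projection]) auto
  ultimately show ?thesis by auto
qed

lemma continuous_map_restrict_coordinate_exists:
  assumes "X \<subseteq> topspace (product_topology (\<lambda>_. discrete_topology UNIV) S)" "B \<subseteq> S" "C \<subseteq> S"
    and "\<And>f. f \<in> X \<Longrightarrow> (\<exists>c\<in>C. f c) \<longleftrightarrow> (\<forall>b\<in>B. f b)"
  shows "continuous_map (subtopology (product_topology (\<lambda>_. discrete_topology UNIV) S) X)
    (discrete_topology UNIV) (\<lambda>f\<in>X. \<exists>c\<in>C. f c)"
proof -
  let ?P = "product_topology (\<lambda>_. discrete_topology (UNIV :: bool set)) S"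
  have "topspace (subtopology ?P X) = X"
    using assms(1) by auto
  moreover have "{f \<in> X. (\<lambda>f\<in>X. \<exists>c\<in>C. f c) f} = {g \<in> topspace ?P. \<exists>c\<in>C. g c = True} \<inter> X"
    "X - {f \<in> X. (\<lambda>f\<in>X. \<exists>c\<in>C. f c) f} = {g \<in> topspace ?P. \<exists>b\<in>B. g b = False} \<inter> X"
    using assms(1,4) by auto
  moreover have "openin (subtopology ?P X) ({g \<in> topspace ?P. \<exists>c\<in>C. g c = True} \<inter> X)"
    "openin (subtopology ?P X) ({g \<in> topspace ?P. \<exists>b\<in>B. g b = False} \<inter> X)"
    by (intro openin_subtopology_Int openin_product_discrete_coordinate assms(2,3))+
  ultimately show ?thesis
    unfolding continuous_map_discrete_bool_iff closedin_def by auto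
qed

lemma join_hom_finite_witness:
  assumes "finite A"
    and "{} \<in> L" "\<And>u v. u \<in> L \<Longrightarrow> v \<in> L \<Longrightarrow> u \<union> v \<in> L"
    and "\<not> h {}" "\<And>u v. u \<in> L \<Longrightarrow> v \<in> L \<Longrightarrow> h (u \<union> v) = (h u \<or> h v)"
    and "\<forall>v\<in>L. A \<subseteq> v \<longrightarrow> h v"
  shows "\<exists>a\<in>A. \<forall>v\<in>L. a \<in> v \<longrightarrow> h v"
  using assms(1,6)
proof (induction A rule: finite_induct)
  case empty
  then show ?case using assms(2,4) by blast
next
  case (insert a A)
  show ?case
  proof (cases "\<forall>v\<in>L. a \<in> v \<longrightarrow> h v")
    case False
    then obtain w where w: "w \<in> L" "a \<in> w" "\<not> h w" by blast
    have "h v" if "v \<in> L" "A \<subseteq> v" for v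
    proof -
      have "h (v \<union> w)" using insert.prems that w assms(3) by blast
      then show "h v" using assms(5) that(1) w(1,3) by blast
    qed
    then show ?thesis using insert.IH by blast
  qed blast
qed

lemma meet_hom_finite_witness:
  assumes "finite D"
    and "S \<in> L" "\<And>u v. u \<in> L \<Longrightarrow> v \<in> L \<Longrightarrow> u \<inter> v \<in> L"
    and "h S" "\<And>u v. u \<in> L \<Longrightarrow> v \<in> L \<Longrightarrow> h (u \<inter> v) = (h u \<and> h v)"
    and "\<forall>v\<in>L. v \<inter> D = {} \<longrightarrow> \<not> h v"
  shows "\<exists>d\<in>D. \<forall>v\<in>L. h v \<longrightarrow> d \<in> v"
  using assms(1,6)
proof (induction D rule: finite_induct)
  case empty
  then show ?case using assms(2,4) by blast
next
  case (insert d D)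
  show ?case
  proof (cases "\<forall>v\<in>L. h v \<longrightarrow> d \<in> v")
    case False
    then obtain w where w: "w \<in> L" "d \<notin> w" "h w" by blast
    have "\<not> h v" if "v \<in> L" "v \<inter> D = {}" for v
    proof -
      have "\<not> h (v \<inter> w)" using insert.prems that w assms(3) by blast
      then show "\<not> h v" using assms(5) that(1) w(1,3) by blast
    qed
    then show ?thesis using insert.IH by blast
  qed blast
qed

section \<open>Clopen segments\<close>

lemma clopen_final_subset_topspace: "clopen_final T le u \<Longrightarrow> u \<subseteq> topspace T"
  by (simp add: clopen_final_def final_segment_def)

lemma clopen_final_Int: "clopen_final T le u \<Longrightarrow> clopen_final T le v \<Longrightarrow> clopen_final T le (u \<inter> v)"
  unfolding clopen_final_def final_segment_def by (auto intro!: openin_Int closedin_Int)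

lemma clopen_final_Un: "clopen_final T le u \<Longrightarrow> clopen_final T le v \<Longrightarrow> clopen_final T le (u \<union> v)"
  unfolding clopen_final_def final_segment_def by (auto intro!: openin_Un closedin_Un)

lemma clopen_final_empty: "clopen_final T le {}"
  unfolding clopen_final_def final_segment_def by auto

lemma clopen_final_topspace: "clopen_final T le (topspace T)"
  unfolding clopen_final_def final_segment_def by auto

lemma clopen_final_Diff_clopen_initial: "clopen_initial T le D \<Longrightarrow> clopen_final T le (topspace T - D)"
  unfolding clopen_final_def final_segment_def clopen_initial_def initial_segment_def
  by (auto intro!: openin_diff closedin_diff)

lemma clopen_initial_Int: "clopen_initial T le u \<Longrightarrow> clopen_initial T le v \<Longrightarrow> clopen_initial T le (u \<inter> v)"
  unfolding clopen_initial_def initial_segment_def by (auto intro!: openin_Int closedin_Int)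

lemma clopen_initial_topspace: "clopen_initial T le (topspace T)"
  unfolding clopen_initial_def initial_segment_def by auto

lemma closedin_Inter_clopen_final:
  "closedin T {x \<in> topspace T. \<forall>v. clopen_final T le v \<and> Q v \<longrightarrow> x \<in> v}"
proof -
  have eq: "{x \<in> topspace T. \<forall>v. clopen_final T le v \<and> Q v \<longrightarrow> x \<in> v} =
      \<Inter>(insert (topspace T) {v. clopen_final T le v \<and> Q v})"
    using clopen_final_subset_topspace by blast
  show ?thesis
    unfolding eq by (intro closedin_Inter) (auto simp: clopen_final_def)
qed

lemma final_segment_Inter_clopen_final:
  "final_segment (topspace T) le {x \<in> topspace T. \<forall>v. clopen_final T le v \<and> Q v \<longrightarrow> x \<in> v}"
  unfolding final_segment_def clopen_final_def by blast

lemma closedin_Inter_compl_clopen_final: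
  "closedin T {x \<in> topspace T. \<forall>v. clopen_final T le v \<and> x \<in> v \<longrightarrow> Q v}"
proof -
  have eq: "{x \<in> topspace T. \<forall>v. clopen_final T le v \<and> x \<in> v \<longrightarrow> Q v} =
      \<Inter>(insert (topspace T) {topspace T - v | v. clopen_final T le v \<and> \<not> Q v})"
    by blast
  show ?thesis
    unfolding eq by (intro closedin_Inter) (auto intro: closedin_diff simp: clopen_final_def)
qed

lemma initial_segment_Inter_compl_clopen_final:
  "initial_segment (topspace T) le {x \<in> topspace T. \<forall>v. clopen_final T le v \<and> x \<in> v \<longrightarrow> Q v}"
  unfolding initial_segment_def clopen_final_def final_segment_def by blast

lemma two_separated_le_iff:
  assumes "two_separated T le" and "x \<in> topspace T" "y \<in> topspace T"
  shows "le x y \<longleftrightarrow> (\<forall>u. clopen_final T le u \<and> x \<in> u \<longrightarrow> y \<in> u)"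
proof
  show "le x y \<Longrightarrow> \<forall>u. clopen_final T le u \<and> x \<in> u \<longrightarrow> y \<in> u"
    using assms(3) by (auto simp: clopen_final_def final_segment_def)
next
  assume up: "\<forall>u. clopen_final T le u \<and> x \<in> u \<longrightarrow> y \<in> u"
  obtain I and e :: "'a \<Rightarrow> 'a set \<Rightarrow> bool" where
    e: "continuous_map T (product_topology (\<lambda>_. discrete_topology UNIV) I) e" and
    embedding: "\<forall>x\<in>topspace T. \<forall>y\<in>topspace T. le x y \<longleftrightarrow> (\<forall>i\<in>I. e x i \<le> e y i)"
    using assms(1) unfolding two_separated_def by blast
  have "e x i \<le> e y i" if "i \<in> I" for i
  proof -
    have "continuous_map T (discrete_topology UNIV) (\<lambda>z. e z i)"
      using continuous_map_compose[OF e continuous_map_product_projection[OF \<open>i \<in> I\<close>]]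
      by (simp add: o_def)
    moreover have "e z i \<le> e z' i" if "z \<in> topspace T" "z' \<in> topspace T" "le z z'" for z z'
      using embedding that \<open>i \<in> I\<close> by blast
    ultimately have "clopen_final T le {z \<in> topspace T. e z i}"
      unfolding clopen_final_def final_segment_def continuous_map_discrete_bool_iff
      by (auto simp: le_bool_def)
    then show ?thesis using up assms(2) by (auto simp: le_bool_def)
  qed
  then show "le x y" using embedding assms(2,3) by blast
qed

definition segment_base :: "'a topology \<Rightarrow> ('a \<Rightarrow> 'a \<Rightarrow> bool) \<Rightarrow> bool" where
  "segment_base T le \<longleftrightarrow> (\<forall>W x. openin T W \<and> x \<in> W \<longrightarrow>
     (\<exists>u D. clopen_final T le u \<and> clopen_initial T le D \<and> x \<in> u \<and> x \<in> D \<and> u \<inter> D \<subseteq> W))"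

lemma segment_baseD:
  "segment_base T le \<Longrightarrow> openin T W \<Longrightarrow> x \<in> W \<Longrightarrow>
    \<exists>u D. clopen_final T le u \<and> clopen_initial T le D \<and> x \<in> u \<and> x \<in> D \<and> u \<inter> D \<subseteq> W"
  unfolding segment_base_def by blast

lemma segment_base_if_generated:
  assumes T: "T = topology_generated_by {U. clopen_final T le U \<or> clopen_initial T le U}"
  shows "segment_base T le"
  unfolding segment_base_def
proof (intro allI impI, elim conjE)
  fix W x assume "openin T W" "x \<in> W"
  have "generate_topology_on {U. clopen_final T le U \<or> clopen_initial T le U} W"
    using \<open>openin T W\<close> T openin_topology_generated_by_iff by metis
  then show "\<exists>u D. clopen_final T le u \<and> clopen_initial T le D \<and> x \<in> u \<and> x \<in> D \<and> u \<inter> D \<subseteq> W"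
    using \<open>x \<in> W\<close>
  proof (induction arbitrary: x rule: generate_topology_on.induct)
    case (Int a b)
    then obtain u D u' D' where
      "clopen_final T le u" "clopen_initial T le D" "x \<in> u" "x \<in> D" "u \<inter> D \<subseteq> a"
      "clopen_final T le u'" "clopen_initial T le D'" "x \<in> u'" "x \<in> D'" "u' \<inter> D' \<subseteq> b"
      by (meson IntD1 IntD2)
    then show ?case
      by (intro exI[of _ "u \<inter> u'"] exI[of _ "D \<inter> D'"]) (auto intro: clopen_final_Int clopen_initial_Int)
  next
    case (UN K)
    then show ?case by (meson UnionE Union_upper subset_trans)
  next
    case (Basis s)
    then consider "clopen_final T le s" | "clopen_initial T le s" by blast
    then show ?case
    proof cases
      case 1
      then show ?thesis
        using Basis.prems clopen_initial_topspace clopen_final_subset_topspace[OF 1]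
        by (intro exI[of _ s] exI[of _ "topspace T"]) auto
    next
      case 2
      then have "s \<subseteq> topspace T" by (simp add: clopen_initial_def initial_segment_def)
      then show ?thesis
        using Basis.prems clopen_final_topspace 2
        by (intro exI[of _ "topspace T"] exI[of _ s]) auto
    qed
  qed simp
qed

section \<open>The dual \<open>P*\<close> and the bidual \<open>P**\<close>\<close>

definition char_on :: "'a set \<Rightarrow> 'a set \<Rightarrow> 'a \<Rightarrow> bool" where
  "char_on P u = (\<lambda>x\<in>P. x \<in> u)"

lemma char_on_in_dual_star:
  assumes "clopen_final T le u"
  shows "char_on (topspace T) u \<in> dual_star T le"
proof -
  have "{x \<in> topspace T. char_on (topspace T) u x} = u"
    using clopen_final_subset_topspace[OF assms] by (auto simp: char_on_def)
  with assms show ?thesis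
    unfolding dual_star_def clopen_final_def final_segment_def continuous_map_discrete_bool_iff
    by (simp add: char_on_def)
qed

lemma clopen_final_support_dual_star:
  "f \<in> dual_star T le \<Longrightarrow> clopen_final T le {x \<in> topspace T. f x}"
  unfolding dual_star_def clopen_final_def final_segment_def continuous_map_discrete_bool_iff
  by (auto simp: le_bool_def)

lemma char_on_support_dual_star:
  "f \<in> dual_star T le \<Longrightarrow> char_on (topspace T) {x \<in> topspace T. f x} = f"
  by (auto simp: dual_star_def char_on_def extensional_def fun_eq_iff)

lemma dual_star_subset_topspace: "dual_star T le \<subseteq> topspace (powL (topspace T))"
  by (auto simp: dual_star_def PiE_iff extensional_def)

lemma dual_star_eq_image: "dual_star T le = char_on (topspace T) ` {u. clopen_final T le u}"
proof (intro subset_antisym subsetI)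
  fix f assume f: "f \<in> dual_star T le"
  show "f \<in> char_on (topspace T) ` {u. clopen_final T le u}"
  proof (rule image_eqI)
    show "f = char_on (topspace T) {x \<in> topspace T. f x}"
      by (simp only: char_on_support_dual_star[OF f])
  qed (simp add: clopen_final_support_dual_star[OF f])
next
  fix f assume "f \<in> char_on (topspace T) ` {u. clopen_final T le u}"
  then obtain u where "clopen_final T le u" "f = char_on (topspace T) u" by blast
  then show "f \<in> dual_star T le" by (simp add: char_on_in_dual_star)
qed

lemma char_on_Int: "(\<lambda>x\<in>P. char_on P u x \<and> char_on P v x) = char_on P (u \<inter> v)"
  and char_on_Un: "(\<lambda>x\<in>P. char_on P u x \<or> char_on P v x) = char_on P (u \<union> v)"
  and char_on_empty: "(\<lambda>x\<in>P. False) = char_on P {}"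
  and char_on_self: "(\<lambda>x\<in>P. True) = char_on P P"
  by (auto simp: char_on_def)

lemma dual_star_star_iff:
  "\<phi> \<in> dual_star_star T le \<longleftrightarrow>
     \<phi> \<in> extensional (dual_star T le) \<and>
     continuous_map (dual_star_top T le) (discrete_topology UNIV) \<phi> \<and>
     (\<forall>u v. clopen_final T le u \<longrightarrow> clopen_final T le v \<longrightarrow>
        \<phi> (char_on (topspace T) (u \<inter> v)) = (\<phi> (char_on (topspace T) u) \<and> \<phi> (char_on (topspace T) v))) \<and>
     (\<forall>u v. clopen_final T le u \<longrightarrow> clopen_final T le v \<longrightarrow>
        \<phi> (char_on (topspace T) (u \<union> v)) = (\<phi> (char_on (topspace T) u) \<or> \<phi> (char_on (topspace T) v))) \<and>
     \<not> \<phi> (char_on (topspace T) {}) \<and> \<phi> (char_on (topspace T) (topspace T))"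
proof -
  have balls: "(\<forall>f\<in>dual_star T le. \<forall>g\<in>dual_star T le. Q f g) \<longleftrightarrow>
      (\<forall>u v. clopen_final T le u \<longrightarrow> clopen_final T le v \<longrightarrow>
         Q (char_on (topspace T) u) (char_on (topspace T) v))" for Q
    by (simp add: dual_star_eq_image)
  show ?thesis
    unfolding dual_star_star_def Let_def balls
    by (simp add: char_on_Int char_on_Un char_on_empty char_on_self)
qed

lemma evaluation_eq_iff:
  assumes "\<phi> \<in> extensional (dual_star T le)" and "x \<in> topspace T"
  shows "\<phi> = evaluation T le x \<longleftrightarrow>
    (\<forall>u. clopen_final T le u \<longrightarrow> \<phi> (char_on (topspace T) u) = (x \<in> u))"
proof
  assume ev: "\<phi> = evaluation T le x"
  show "\<forall>u. clopen_final T le u \<longrightarrow> \<phi> (char_on (topspace T) u) = (x \<in> u)"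
  proof (intro allI impI)
    fix u assume "clopen_final T le u"
    then have "\<phi> (char_on (topspace T) u) = char_on (topspace T) u x"
      unfolding ev evaluation_def by (intro restrict_apply' char_on_in_dual_star)
    also have "\<dots> = (x \<in> u)"
      using assms(2) by (simp add: char_on_def)
    finally show "\<phi> (char_on (topspace T) u) = (x \<in> u)" .
  qed
next
  assume segments: "\<forall>u. clopen_final T le u \<longrightarrow> \<phi> (char_on (topspace T) u) = (x \<in> u)"
  show "\<phi> = evaluation T le x"
  proof
    fix f
    show "\<phi> f = evaluation T le x f"
    proof (cases "f \<in> dual_star T le")
      case True
      have "\<phi> f = \<phi> (char_on (topspace T) {z \<in> topspace T. f z})"
        by (simp only: char_on_support_dual_star[OF True])
      also have "\<dots> = f x"
        using segments clopen_final_support_dual_star[OF True] assms(2) by simp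
      finally show ?thesis using True by (simp add: evaluation_def)
    next
      case False
      then show ?thesis by (simp add: evaluation_def extensional_arb[OF assms(1) False])
    qed
  qed
qed

section \<open>Points of \<open>P**\<close> are evaluations\<close>

context
  fixes T :: "'a topology" and le :: "'a \<Rightarrow> 'a \<Rightarrow> bool" and \<phi>
  assumes \<phi>: "\<phi> \<in> dual_star_star T le"
begin

abbreviation \<Phi> :: "'a set \<Rightarrow> bool" where
  "\<Phi> u \<equiv> \<phi> (char_on (topspace T) u)"

lemma \<Phi>_Int: "clopen_final T le u \<Longrightarrow> clopen_final T le v \<Longrightarrow> \<Phi> (u \<inter> v) = (\<Phi> u \<and> \<Phi> v)"
  and \<Phi>_Un: "clopen_final T le u \<Longrightarrow> clopen_final T le v \<Longrightarrow> \<Phi> (u \<union> v) = (\<Phi> u \<or> \<Phi> v)"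
  and \<Phi>_empty: "\<not> \<Phi> {}"
  and \<Phi>_topspace: "\<Phi> (topspace T)"
  using \<phi> unfolding dual_star_star_iff by blast+

lemma \<Phi>_locally_finite:
  assumes "clopen_final T le u"
  shows "\<exists>F. finite F \<and> (\<forall>v. clopen_final T le v \<and> v \<inter> F = u \<inter> F \<longrightarrow> \<Phi> v = \<Phi> u)"
proof -
  have "continuous_map (subtopology (powL (topspace T)) (dual_star T le)) (discrete_topology UNIV) \<phi>"
    using \<phi> unfolding dual_star_star_iff dual_star_top_def by blast
  moreover have "dual_star T le \<subseteq> extensional (topspace T)"
    by (auto simp: dual_star_def)
  ultimately obtain F where F: "finite F" and
    agree: "\<forall>g\<in>dual_star T le. (\<forall>i\<in>F. g i = char_on (topspace T) u i) \<longrightarrow> \<phi> g = \<Phi> u"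
    using continuous_map_product_finite_support[OF _ char_on_in_dual_star[OF assms]] by blast
  have "\<Phi> v = \<Phi> u" if "clopen_final T le v" "v \<inter> F = u \<inter> F" for v
  proof -
    have "\<forall>i\<in>F. char_on (topspace T) v i = char_on (topspace T) u i"
      using that(2) by (auto simp: char_on_def)
    then show ?thesis using agree char_on_in_dual_star[OF that(1)] by blast
  qed
  with F show ?thesis by blast
qed

lemma \<Phi>_witness_inside:
  assumes "clopen_final T le u" "\<Phi> u"
  shows "\<exists>a\<in>u. \<forall>v. clopen_final T le v \<and> a \<in> v \<longrightarrow> \<Phi> v"
proof -
  obtain F where "finite F" and
    F: "\<forall>v. clopen_final T le v \<and> v \<inter> F = u \<inter> F \<longrightarrow> \<Phi> v = \<Phi> u"
    using \<Phi>_locally_finite[OF assms(1)] by blast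
  have "\<Phi> v" if "clopen_final T le v" "F \<inter> u \<subseteq> v" for v
  proof -
    have "\<Phi> (v \<inter> u)"
      using F clopen_final_Int[OF that(1) assms(1)] that(2) assms(2) by blast
    then show ?thesis using \<Phi>_Int that(1) assms(1) by blast
  qed
  then obtain a where "a \<in> F \<inter> u" "\<forall>v\<in>{v. clopen_final T le v}. a \<in> v \<longrightarrow> \<Phi> v"
    using join_hom_finite_witness[of "F \<inter> u" "{v. clopen_final T le v}" \<Phi>] \<open>finite F\<close>
      clopen_final_empty clopen_final_Un \<Phi>_empty \<Phi>_Un by blast
  then show ?thesis by blast
qed

lemma \<Phi>_witness_outside:
  assumes "clopen_final T le u" "\<not> \<Phi> u"
  shows "\<exists>d\<in>topspace T - u. \<forall>v. clopen_final T le v \<and> \<Phi> v \<longrightarrow> d \<in> v"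
proof -
  obtain F where "finite F" and
    F: "\<forall>v. clopen_final T le v \<and> v \<inter> F = u \<inter> F \<longrightarrow> \<Phi> v = \<Phi> u"
    using \<Phi>_locally_finite[OF assms(1)] by blast
  have "\<not> \<Phi> v" if "clopen_final T le v" "v \<inter> (F - u) = {}" for v
  proof -
    have "\<not> \<Phi> (v \<union> u)"
      using F clopen_final_Un[OF that(1) assms(1)] that(2) assms(2) by blast
    then show ?thesis using \<Phi>_Un that(1) assms(1) by blast
  qed
  then obtain d where "d \<in> F - u" "\<forall>v\<in>{v. clopen_final T le v}. \<Phi> v \<longrightarrow> d \<in> v"
    using meet_hom_finite_witness[of "F - u" "topspace T" "{v. clopen_final T le v}" \<Phi>] \<open>finite F\<close>
      clopen_final_topspace clopen_final_Int \<Phi>_topspace \<Phi>_Int by blast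
  then show ?thesis using clopen_final_topspace \<Phi>_topspace by blast
qed

lemma \<Phi>_principal:
  assumes "two_separated T le"
    and separation: "\<forall>B C. closedin T B \<and> final_segment (topspace T) le B \<and>
           closedin T C \<and> initial_segment (topspace T) le C \<and>
           (\<forall>x\<in>C. \<forall>y\<in>B. le x y \<and> x \<noteq> y) \<longrightarrow>
           (\<exists>u. clopen_final T le u \<and> B \<subseteq> u \<and> C \<inter> u = {})"
  shows "\<exists>x\<in>topspace T. \<forall>u. clopen_final T le u \<longrightarrow> \<Phi> u = (x \<in> u)"
proof -
  define B where "B = {x \<in> topspace T. \<forall>v. clopen_final T le v \<and> \<Phi> v \<longrightarrow> x \<in> v}"
  define C where "C = {x \<in> topspace T. \<forall>v. clopen_final T le v \<and> x \<in> v \<longrightarrow> \<Phi> v}"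
  have "B \<inter> C \<noteq> {}"
  proof
    assume disjoint: "B \<inter> C = {}"
    have "le c b \<and> c \<noteq> b" if "c \<in> C" "b \<in> B" for c b
    proof
      have "c \<in> topspace T" "b \<in> topspace T"
        using that by (simp_all add: B_def C_def)
      moreover have "\<forall>v. clopen_final T le v \<and> c \<in> v \<longrightarrow> b \<in> v"
        using that unfolding B_def C_def by blast
      ultimately show "le c b" by (simp add: two_separated_le_iff[OF assms(1)])
      show "c \<noteq> b" using that disjoint by blast
    qed
    moreover have "closedin T B" "final_segment (topspace T) le B"
      "closedin T C" "initial_segment (topspace T) le C"
      unfolding B_def C_def
      by (rule closedin_Inter_clopen_final final_segment_Inter_clopen_final
          closedin_Inter_compl_clopen_final initial_segment_Inter_compl_clopen_final)+
    ultimately obtain u where u: "clopen_final T le u" "B \<subseteq> u" "C \<inter> u = {}"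
      using separation by meson
    show False
    proof (cases "\<Phi> u")
      case True
      then obtain a where "a \<in> u" "\<forall>v. clopen_final T le v \<and> a \<in> v \<longrightarrow> \<Phi> v"
        using \<Phi>_witness_inside u(1) by blast
      then have "a \<in> C" using clopen_final_subset_topspace[OF u(1)] unfolding C_def by blast
      with u(3) \<open>a \<in> u\<close> show False by blast
    next
      case False
      then obtain d where "d \<in> topspace T - u" "\<forall>v. clopen_final T le v \<and> \<Phi> v \<longrightarrow> d \<in> v"
        using \<Phi>_witness_outside u(1) by blast
      then have "d \<in> B" unfolding B_def by blast
      with u(2) \<open>d \<in> topspace T - u\<close> show False by blast
    qed
  qed
  then obtain x where "x \<in> B" "x \<in> C" by blast
  then show ?thesis unfolding B_def C_def by blast
qed

lemma dual_star_star_is_evaluation: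
  assumes "two_separated T le"
    and "\<forall>B C. closedin T B \<and> final_segment (topspace T) le B \<and>
           closedin T C \<and> initial_segment (topspace T) le C \<and>
           (\<forall>x\<in>C. \<forall>y\<in>B. le x y \<and> x \<noteq> y) \<longrightarrow>
           (\<exists>u. clopen_final T le u \<and> B \<subseteq> u \<and> C \<inter> u = {})"
  shows "\<exists>x\<in>topspace T. \<phi> = evaluation T le x"
proof -
  obtain x where x: "x \<in> topspace T" "\<forall>u. clopen_final T le u \<longrightarrow> \<Phi> u = (x \<in> u)"
    using \<Phi>_principal[OF assms] by blast
  have "\<phi> \<in> extensional (dual_star T le)"
    using \<phi> unfolding dual_star_star_iff by blast
  with x have "\<phi> = evaluation T le x"
    by (simp add: evaluation_eq_iff)
  with x(1) show ?thesis by blast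
qed

end

section \<open>Unseparated gaps\<close>

definition support_meets :: "'a topology \<Rightarrow> ('a \<Rightarrow> 'a \<Rightarrow> bool) \<Rightarrow> 'a set \<Rightarrow> ('a \<Rightarrow> bool) \<Rightarrow> bool" where
  "support_meets T le C = (\<lambda>f\<in>dual_star T le. \<exists>c\<in>C. f c)"

lemma support_meets_char_on:
  assumes "C \<subseteq> topspace T" "clopen_final T le u"
  shows "support_meets T le C (char_on (topspace T) u) = (C \<inter> u \<noteq> {})"
  unfolding support_meets_def restrict_apply'[OF char_on_in_dual_star[OF assms(2)]]
  using assms(1) by (auto simp: char_on_def)

lemma support_meets_in_dual_star_star:
  assumes "B \<subseteq> topspace T" "C \<subseteq> topspace T"
    and gap: "\<And>u. clopen_final T le u \<Longrightarrow> B \<subseteq> u \<longleftrightarrow> C \<inter> u \<noteq> {}"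
  shows "support_meets T le C \<in> dual_star_star T le"
proof -
  let ?\<psi> = "support_meets T le C"
  have meets: "?\<psi> (char_on (topspace T) u) \<longleftrightarrow> C \<inter> u \<noteq> {}"
    and contains: "?\<psi> (char_on (topspace T) u) \<longleftrightarrow> B \<subseteq> u" if "clopen_final T le u" for u
    using support_meets_char_on[OF assms(2) that] gap[OF that] by blast+
  have "(\<exists>c\<in>C. f c) \<longleftrightarrow> (\<forall>b\<in>B. f b)" if "f \<in> dual_star T le" for f
    using gap[OF clopen_final_support_dual_star[OF that]] assms(1,2) by blast
  then have "continuous_map (dual_star_top T le) (discrete_topology UNIV) ?\<psi>"
    unfolding dual_star_top_def support_meets_def
    by (rule continuous_map_restrict_coordinate_exists[OF dual_star_subset_topspace assms(1,2)])
  moreover have "?\<psi> \<in> extensional (dual_star T le)"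
    by (simp add: support_meets_def)
  moreover have "\<forall>u v. clopen_final T le u \<longrightarrow> clopen_final T le v \<longrightarrow>
      ?\<psi> (char_on (topspace T) (u \<inter> v)) = (?\<psi> (char_on (topspace T) u) \<and> ?\<psi> (char_on (topspace T) v))"
    by (simp add: contains clopen_final_Int)
  moreover have "\<forall>u v. clopen_final T le u \<longrightarrow> clopen_final T le v \<longrightarrow>
      ?\<psi> (char_on (topspace T) (u \<union> v)) = (?\<psi> (char_on (topspace T) u) \<or> ?\<psi> (char_on (topspace T) v))"
    by (auto simp: meets clopen_final_Un)
  moreover have "\<not> ?\<psi> (char_on (topspace T) {})"
    by (simp add: meets clopen_final_empty)
  moreover have "?\<psi> (char_on (topspace T) (topspace T))"
    by (simp add: contains clopen_final_topspace assms(1))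
  ultimately show ?thesis
    unfolding dual_star_star_iff by blast
qed

lemma no_point_between:
  assumes base: "segment_base T le"
    and "closedin T B" "closedin T C" "B \<inter> C = {}" "x \<in> topspace T"
    and above: "\<And>u. clopen_final T le u \<Longrightarrow> x \<in> u \<longleftrightarrow> B \<subseteq> u"
    and below: "\<And>u. clopen_final T le u \<Longrightarrow> x \<in> u \<longleftrightarrow> C \<inter> u \<noteq> {}"
  shows False
proof (cases "x \<in> B")
  case False
  have "openin T (topspace T - B)" using assms(2) by (simp add: closedin_def)
  then obtain u D where uD: "clopen_final T le u" "clopen_initial T le D" "x \<in> u" "x \<in> D"
      "u \<inter> D \<subseteq> topspace T - B"
    using segment_baseD[OF base] False assms(5) by blast
  have "B \<subseteq> topspace T - D"
    using above[OF uD(1)] uD(3,5) closedin_subset[OF assms(2)] by blast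
  then show False
    using above[OF clopen_final_Diff_clopen_initial[OF uD(2)]] uD(4) by blast
next
  case True
  have "openin T (topspace T - C)" using assms(3) by (simp add: closedin_def)
  then obtain u D where uD: "clopen_final T le u" "clopen_initial T le D" "x \<in> u" "x \<in> D"
      "u \<inter> D \<subseteq> topspace T - C"
    using segment_baseD[OF base] True assms(4,5) by blast
  then obtain c where "c \<in> C" "c \<in> u" using below by blast
  then have "C \<inter> (topspace T - D) \<noteq> {}"
    using uD(5) closedin_subset[OF assms(3)] by blast
  then show False
    using below[OF clopen_final_Diff_clopen_initial[OF uD(2)]] uD(4) by blast
qed

lemma unseparated_gap:
  assumes "B \<subseteq> topspace T" and below: "\<forall>x\<in>C. \<forall>y\<in>B. le x y"
    and no_separator: "\<nexists>u. clopen_final T le u \<and> B \<subseteq> u \<and> C \<inter> u = {}"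
    and u: "clopen_final T le u"
  shows "B \<subseteq> u \<longleftrightarrow> C \<inter> u \<noteq> {}"
proof
  show "B \<subseteq> u \<Longrightarrow> C \<inter> u \<noteq> {}"
    using no_separator u by auto
next
  assume "C \<inter> u \<noteq> {}"
  then obtain c where c: "c \<in> C" "c \<in> u" by blast
  show "B \<subseteq> u"
  proof
    fix b assume "b \<in> B"
    then have "le c b" using below c(1) by blast
    then show "b \<in> u"
      using u c(2) \<open>b \<in> B\<close> assms(1) by (auto simp: clopen_final_def final_segment_def)
  qed
qed

lemma reflexive_separates:
  assumes "reflexive_tposet T le"
    and base: "segment_base T le"
    and "closedin T B" "closedin T C" and below: "\<forall>x\<in>C. \<forall>y\<in>B. le x y \<and> x \<noteq> y"
  shows "\<exists>u. clopen_final T le u \<and> B \<subseteq> u \<and> C \<inter> u = {}"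
proof (rule ccontr)
  assume no_separator: "\<nexists>u. clopen_final T le u \<and> B \<subseteq> u \<and> C \<inter> u = {}"
  have B: "B \<subseteq> topspace T" and C: "C \<subseteq> topspace T"
    using assms(3,4) by (simp_all add: closedin_subset)
  have gap: "B \<subseteq> u \<longleftrightarrow> C \<inter> u \<noteq> {}" if "clopen_final T le u" for u
    using unseparated_gap[OF B _ no_separator that] below by blast
  have "support_meets T le C \<in> evaluation T le ` topspace T"
    using support_meets_in_dual_star_star[OF B C gap] assms(1) unfolding reflexive_tposet_def by blast
  then obtain x where x: "x \<in> topspace T" and ev: "support_meets T le C = evaluation T le x"
    by blast
  have "support_meets T le C \<in> extensional (dual_star T le)"
    by (simp add: support_meets_def)
  from iffD1[OF evaluation_eq_iff[OF this x] ev]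
  have evaluates: "\<forall>u. clopen_final T le u \<longrightarrow> support_meets T le C (char_on (topspace T) u) = (x \<in> u)" .
  have meets_x: "x \<in> u \<longleftrightarrow> C \<inter> u \<noteq> {}" if "clopen_final T le u" for u
    using evaluates[rule_format, OF that] support_meets_char_on[OF C that] by simp
  have contains_x: "x \<in> u \<longleftrightarrow> B \<subseteq> u" if "clopen_final T le u" for u
    using meets_x[OF that] gap[OF that] by simp
  have "B \<inter> C = {}"
    using below by blast
  from no_point_between[OF base assms(3,4) this x contains_x meets_x]
  show False .
qed

theorem mainTheorem15:
  fixes T :: "'a topology" and le :: "'a \<Rightarrow> 'a \<Rightarrow> bool"
  assumes "topological_poset T le"
    and "two_separated T le"
    and "T = topology_generated_by {U. clopen_final T le U \<or> clopen_initial T le U}"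
  shows "reflexive_tposet T le \<longleftrightarrow>
    (\<forall>B C. closedin T B \<and> final_segment (topspace T) le B \<and>
           closedin T C \<and> initial_segment (topspace T) le C \<and>
           (\<forall>x\<in>C. \<forall>y\<in>B. le x y \<and> x \<noteq> y) \<longrightarrow>
           (\<exists>u. clopen_final T le u \<and> B \<subseteq> u \<and> C \<inter> u = {}))"
proof (intro iffI allI impI)
  fix B C
  assume reflexive: "reflexive_tposet T le" and segments: "closedin T B \<and> final_segment (topspace T) le B \<and>
           closedin T C \<and> initial_segment (topspace T) le C \<and> (\<forall>x\<in>C. \<forall>y\<in>B. le x y \<and> x \<noteq> y)"
  from segments have "closedin T B" "closedin T C" "\<forall>x\<in>C. \<forall>y\<in>B. le x y \<and> x \<noteq> y"
    by simp_all
  with reflexive show "\<exists>u. clopen_final T le u \<and> B \<subseteq> u \<and> C \<inter> u = {}"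
    by (rule reflexive_separates[OF _ segment_base_if_generated[OF assms(3)]])
next
  assume separation: "\<forall>B C. closedin T B \<and> final_segment (topspace T) le B \<and>
           closedin T C \<and> initial_segment (topspace T) le C \<and>
           (\<forall>x\<in>C. \<forall>y\<in>B. le x y \<and> x \<noteq> y) \<longrightarrow>
           (\<exists>u. clopen_final T le u \<and> B \<subseteq> u \<and> C \<inter> u = {})"
  show "reflexive_tposet T le"
    unfolding reflexive_tposet_def
  proof
    fix \<phi> assume "\<phi> \<in> dual_star_star T le"
    then obtain x where "x \<in> topspace T" "\<phi> = evaluation T le x"
      using dual_star_star_is_evaluation[OF _ assms(2) separation] by blast
    then show "\<phi> \<in> evaluation T le ` topspace T" by blast
  qed
qed

end
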